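(* Let $G$ be a group, $A\subseteq G$ a finite set, $N>0$ a real number and $\epsilon\in(0,1)$. Suppose $X\subseteq\operatorname{Stab}^r_N(A)$ is finite and nonempty. Then $|Z^\ell_\epsilon(A,X)|\leq 2N/\epsilon$. In particular, if $X\subseteq\operatorname{St}^r_{\epsilon^2/2}(A)$ is finite and nonempty, then $|Z^\ell_\epsilon(A,X)|\leq\epsilon|A|$.
   Context: $\operatorname{Stab}^r_N(A)=\{x\in G:|Ax\triangle A|\leq N\}$ ($\triangle$ symmetric difference) and $\operatorname{St}^r_\eta(A)=\operatorname{Stab}^r_{\eta|A|}(A)$. For finite $A,X\subseteq G$, $Z^\ell_\epsilon(A,X)=\{g\in G:\min\{|gX\cap A|,|gX\setminus A|\}\geq\epsilon|X|\}$. *)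

theory Defs
  imports Complex_Main
begin

text \<open>The ambient group G is a type of class group_add (not necessarily
commutative); the group product xy is written x + y.\<close>

definition rtrans :: "'a::group_add set \<Rightarrow> 'a \<Rightarrow> 'a set" where
  "rtrans A x = (\<lambda>a. a + x) ` A"

definition ltrans :: "'a::group_add \<Rightarrow> 'a set \<Rightarrow> 'a set" where
  "ltrans g X = (\<lambda>x. g + x) ` X"

definition symdiff :: "'a set \<Rightarrow> 'a set \<Rightarrow> 'a set" where
  "symdiff B C = (B - C) \<union> (C - B)"

definition Stab_r :: "real \<Rightarrow> 'a::group_add set \<Rightarrow> 'a set" where
  "Stab_r N A = {x. real (card (symdiff (rtrans A x) A)) \<le> N}"

definition St_r :: "real \<Rightarrow> 'a::group_add set \<Rightarrow> 'a set" where
  "St_r \<eta> A = Stab_r (\<eta> * real (card A)) A"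

definition Z_l :: "real \<Rightarrow> 'a::group_add set \<Rightarrow> 'a set \<Rightarrow> 'a set" where
  "Z_l \<epsilon> A X = {g. real (min (card (ltrans g X \<inter> A)) (card (ltrans g X - A)))
                       \<ge> \<epsilon> * real (card X)}"

end

theory Submission
  imports Defs
begin

text \<open>For \<open>x \<in> X\<close> let \<open>D x = A(-x) \<triangle> A\<close>, a translate of \<open>Ax \<triangle> A\<close>, so \<open>|D x| \<le> N\<close>.
  A point \<open>g\<close> lies in \<open>D x\<close> exactly when \<open>gx\<close> and \<open>g\<close> are on different sides of \<open>A\<close>;
  hence \<open>g \<in> Z\<^sup>\<ell>\<^sub>\<epsilon>(A,X)\<close> lies in at least \<open>\<epsilon>|X|\<close> of the sets \<open>D x\<close>.
  Double counting the incidences gives \<open>\<epsilon>|X| |Z| \<le> N|X|\<close>, i.e. \<open>|Z| \<le> N/\<epsilon>\<close>.\<close>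

lemma mem_rtrans_iff: "z \<in> rtrans A x \<longleftrightarrow> z + - x \<in> A"
proof
  assume "z \<in> rtrans A x"
  then show "z + - x \<in> A"
    unfolding rtrans_def by (auto simp: add.assoc)
next
  assume "z + - x \<in> A"
  moreover have "z = (z + - x) + x"
    by (simp add: add.assoc)
  ultimately show "z \<in> rtrans A x"
    unfolding rtrans_def by (rule rev_image_eqI)
qed

lemma rtrans_rtrans: "rtrans (rtrans A y) x = rtrans A (y + x)"
  unfolding rtrans_def by (auto simp: image_image add.assoc)

lemma rtrans_zero [simp]: "rtrans A 0 = A"
  unfolding rtrans_def by simp

lemma card_rtrans: "card (rtrans A x) = card A"
  unfolding rtrans_def by (simp add: card_image)

lemma rtrans_symdiff: "rtrans (symdiff B C) x = symdiff (rtrans B x) (rtrans C x)"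
  unfolding rtrans_def symdiff_def by (simp add: image_Un image_set_diff[OF inj_on_add'[of _ UNIV]])

lemma card_symdiff_rtrans_uminus: "card (symdiff (rtrans A (- x)) A) = card (symdiff (rtrans A x) A)"
proof -
  have "rtrans (symdiff (rtrans A (- x)) A) x = symdiff A (rtrans A x)"
    by (simp add: rtrans_symdiff rtrans_rtrans)
  then show ?thesis
    by (metis card_rtrans symdiff_def Un_commute)
qed

lemma min_card_ltrans_le:
  fixes g :: "'a::group_add"
  assumes "finite X"
  shows "min (card (ltrans g X \<inter> A)) (card (ltrans g X - A)) \<le> card {x\<in>X. (g + x \<in> A) \<noteq> (g \<in> A)}"
proof (cases "g \<in> A")
  case True
  have "ltrans g X - A = (\<lambda>x. g + x) ` {x\<in>X. (g + x \<in> A) \<noteq> (g \<in> A)}"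
    unfolding ltrans_def using True by auto
  then have "card (ltrans g X - A) \<le> card {x\<in>X. (g + x \<in> A) \<noteq> (g \<in> A)}"
    by (simp add: card_image_le assms)
  then show ?thesis by linarith
next
  case False
  have "ltrans g X \<inter> A = (\<lambda>x. g + x) ` {x\<in>X. (g + x \<in> A) \<noteq> (g \<in> A)}"
    unfolding ltrans_def using False by auto
  then have "card (ltrans g X \<inter> A) \<le> card {x\<in>X. (g + x \<in> A) \<noteq> (g \<in> A)}"
    by (simp add: card_image_le assms)
  then show ?thesis by linarith
qed

lemma card_frequent_points_mult_le:
  fixes D :: "'b \<Rightarrow> 'a set" and N \<epsilon> :: real
  assumes "finite X" and "X \<noteq> {}" and "0 < \<epsilon>"
    and D: "\<And>x. x \<in> X \<Longrightarrow> finite (D x) \<and> real (card (D x)) \<le> N"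
    and frequent: "\<And>g. g \<in> Z \<Longrightarrow> \<epsilon> * real (card X) \<le> real (card {x\<in>X. g \<in> D x})"
  shows "finite Z \<and> real (card Z) * \<epsilon> \<le> N"
proof -
  have card_X: "0 < real (card X)"
    using \<open>finite X\<close> \<open>X \<noteq> {}\<close> by (simp add: card_gt_0_iff)
  have "Z \<subseteq> (\<Union>x\<in>X. D x)"
  proof
    fix g assume "g \<in> Z"
    then have "0 < real (card {x\<in>X. g \<in> D x})"
      using frequent[of g] card_X \<open>0 < \<epsilon>\<close> by (smt (verit) mult_pos_pos)
    then show "g \<in> (\<Union>x\<in>X. D x)"
      by (auto dest: card_gt_0_iff[THEN iffD1])
  qed
  then have "finite Z"
    using \<open>finite X\<close> D by (meson finite_UN_I finite_subset)
  have "real (card Z) * \<epsilon> * real (card X) = (\<Sum>g\<in>Z. \<epsilon> * real (card X))"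
    by simp
  also have "\<dots> \<le> (\<Sum>g\<in>Z. real (card {x\<in>X. g \<in> D x}))"
    by (rule sum_mono) (rule frequent)
  also have "\<dots> = (\<Sum>x\<in>X. real (card {g\<in>Z. g \<in> D x}))"
    using sum_multicount_gen[OF \<open>finite Z\<close> \<open>finite X\<close>, of "\<lambda>g x. g \<in> D x"]
    by (simp flip: of_nat_sum)
  also have "\<dots> \<le> (\<Sum>x\<in>X. real (card (D x)))"
    using D by (intro sum_mono of_nat_mono card_mono) auto
  also have "\<dots> \<le> (\<Sum>x\<in>X. N)"
    using D by (intro sum_mono) auto
  finally show ?thesis
    using \<open>finite Z\<close> card_X by (simp add: mult.commute)
qed

lemma card_Z_l_mult_le:
  fixes A :: "'a::group_add set" and N \<epsilon> :: real
  assumes "finite A" "0 < \<epsilon>" "finite X" "X \<noteq> {}" and X: "X \<subseteq> Stab_r N A"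
  shows "finite (Z_l \<epsilon> A X) \<and> real (card (Z_l \<epsilon> A X)) * \<epsilon> \<le> N"
proof (rule card_frequent_points_mult_le[where D = "\<lambda>x. symdiff (rtrans A (- x)) A"])
  fix x assume "x \<in> X"
  then have "real (card (symdiff (rtrans A (- x)) A)) \<le> N"
    using X by (auto simp: Stab_r_def card_symdiff_rtrans_uminus)
  moreover have "finite (symdiff (rtrans A (- x)) A)"
    using \<open>finite A\<close> by (simp add: symdiff_def rtrans_def)
  ultimately show "finite (symdiff (rtrans A (- x)) A) \<and> real (card (symdiff (rtrans A (- x)) A)) \<le> N"
    by blast
next
  fix g assume "g \<in> Z_l \<epsilon> A X"
  then have "\<epsilon> * real (card X) \<le> real (min (card (ltrans g X \<inter> A)) (card (ltrans g X - A)))"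
    by (simp add: Z_l_def)
  also have "\<dots> \<le> real (card {x\<in>X. (g + x \<in> A) \<noteq> (g \<in> A)})"
    using min_card_ltrans_le[OF \<open>finite X\<close>] of_nat_mono by blast
  also have "{x\<in>X. (g + x \<in> A) \<noteq> (g \<in> A)} = {x\<in>X. g \<in> symdiff (rtrans A (- x)) A}"
    by (auto simp: symdiff_def mem_rtrans_iff)
  finally show "\<epsilon> * real (card X) \<le> real (card {x\<in>X. g \<in> symdiff (rtrans A (- x)) A})" .
qed (use assms in auto)

theorem lemma3p3:
  fixes A :: "'a::group_add set" and N \<epsilon> :: real
  assumes "finite A" and "0 < \<epsilon>" and "\<epsilon> < 1"
  shows "(\<forall>X. 0 < N \<and> finite X \<and> X \<noteq> {} \<and> X \<subseteq> Stab_r N A \<longrightarrow>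
            finite (Z_l \<epsilon> A X) \<and> real (card (Z_l \<epsilon> A X)) \<le> 2 * N / \<epsilon>)
       \<and> (\<forall>X. finite X \<and> X \<noteq> {} \<and> X \<subseteq> St_r (\<epsilon>^2 / 2) A \<longrightarrow>
            finite (Z_l \<epsilon> A X) \<and> real (card (Z_l \<epsilon> A X)) \<le> \<epsilon> * real (card A))"
proof (rule conjI; intro allI impI)
  fix X assume X: "0 < N \<and> finite X \<and> X \<noteq> {} \<and> X \<subseteq> Stab_r N A"
  then have Z: "finite (Z_l \<epsilon> A X) \<and> real (card (Z_l \<epsilon> A X)) * \<epsilon> \<le> N"
    using card_Z_l_mult_le assms(1,2) by blast
  then have "real (card (Z_l \<epsilon> A X)) \<le> N / \<epsilon>"
    using \<open>0 < \<epsilon>\<close> by (simp add: pos_le_divide_eq)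
  also have "\<dots> \<le> 2 * N / \<epsilon>"
    using X \<open>0 < \<epsilon>\<close> by (simp add: divide_right_mono)
  finally show "finite (Z_l \<epsilon> A X) \<and> real (card (Z_l \<epsilon> A X)) \<le> 2 * N / \<epsilon>"
    using Z by blast
next
  fix X assume "finite X \<and> X \<noteq> {} \<and> X \<subseteq> St_r (\<epsilon>^2 / 2) A"
  then have Z: "finite (Z_l \<epsilon> A X) \<and> real (card (Z_l \<epsilon> A X)) * \<epsilon> \<le> \<epsilon>^2 / 2 * real (card A)"
    using card_Z_l_mult_le[OF assms(1,2)] unfolding St_r_def by blast
  then have "real (card (Z_l \<epsilon> A X)) * \<epsilon> \<le> (\<epsilon> * real (card A) / 2) * \<epsilon>"
    by (simp add: power2_eq_square mult_ac)
  then have "real (card (Z_l \<epsilon> A X)) \<le> \<epsilon> * real (card A) / 2"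
    using \<open>0 < \<epsilon>\<close> mult_right_le_imp_le by blast
  also have "\<dots> \<le> \<epsilon> * real (card A)"
    using \<open>0 < \<epsilon>\<close> by simp
  finally show "finite (Z_l \<epsilon> A X) \<and> real (card (Z_l \<epsilon> A X)) \<le> \<epsilon> * real (card A)"
    using Z by blast
qed

end
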